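(* The trace norm $\|\cdot\|_1$ is the minimum element of the class of $L$-norms $\||\cdot\||$ on $\mathbb{M}_n$ satisfying $\omega(A)\le\||A\||$ for all $A\in\mathbb{M}_n$.
   Context: $\mathbb{M}_n$ is the algebra of complex $n\times n$ matrices with identity $I$; $\|A\|_1=\mathrm{Tr}(|A|)$ is the trace norm and $\omega(A)=\sup\{|\langle x,Ax\rangle|:\|x\|=1\}$ the numerical radius. A norm $\||\cdot\||$ on $\mathbb{M}_n$ is an $L$-norm if $\sum_{i=1}^k\||C_iXC_i^*\||\le\||X\||$ for all $k$, all $X$ and all $C_i$ with $\sum_{i=1}^k C_i^*C_i=I$. *)

theory Defs
  imports "HOL-Analysis.Analysis"
begin

definition cinner :: "complex^'n \<Rightarrow> complex^'n \<Rightarrow> complex" where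
  "cinner x y = (\<Sum>i\<in>UNIV. cnj (x$i) * y$i)"

definition madj :: "complex^'n^'n \<Rightarrow> complex^'n^'n" where
  "madj A = (\<chi> i j. cnj (A$j$i))"

definition mscale :: "complex \<Rightarrow> complex^'n^'n \<Rightarrow> complex^'n^'n" where
  "mscale c A = (\<chi> i j. c * A$i$j)"

definition psd :: "complex^'n^'n \<Rightarrow> bool" where
  "psd A \<longleftrightarrow> (\<forall>x. Im (cinner x (A *v x)) = 0 \<and> Re (cinner x (A *v x)) \<ge> 0)"

definition mabs :: "complex^'n^'n \<Rightarrow> complex^'n^'n" where
  "mabs A = (THE P. psd P \<and> P ** P = madj A ** A)"

definition trace_norm :: "complex^'n^'n \<Rightarrow> real" where
  "trace_norm A = Re (trace (mabs A))"

definition numerical_radius :: "complex^'n^'n \<Rightarrow> real" where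
  "numerical_radius A = (SUP x\<in>{x. norm x = 1}. cmod (cinner x (A *v x)))"

definition is_matrix_norm :: "(complex^'n^'n \<Rightarrow> real) \<Rightarrow> bool" where
  "is_matrix_norm N \<longleftrightarrow>
     (\<forall>A. N A \<ge> 0) \<and> (\<forall>A. N A = 0 \<longleftrightarrow> A = 0) \<and>
     (\<forall>c A. N (mscale c A) = cmod c * N A) \<and> (\<forall>A B. N (A + B) \<le> N A + N B)"

definition is_L_norm :: "(complex^'n^'n \<Rightarrow> real) \<Rightarrow> bool" where
  "is_L_norm N \<longleftrightarrow> is_matrix_norm N \<and>
     (\<forall>(k::nat) (C::nat \<Rightarrow> complex^'n^'n) X.
        (\<Sum>i<k. madj (C i) ** C i) = mat 1 \<longrightarrow>
        (\<Sum>i<k. N (C i ** X ** madj (C i))) \<le> N X)"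

end

theory Submission
  imports Defs
begin

text \<open>
  Trace duality \<open>\<parallel>X\<parallel>\<^sub>1 = max {|tr (W X)| : \<parallel>W\<parallel> \<le> 1}\<close>, computed in a singular basis of \<open>X\<close>,
  gives the norm axioms, the bound \<open>\<omega> \<le> \<parallel>\<cdot>\<parallel>\<^sub>1\<close> and, with the weighted AM-GM inequality,
  the \<open>L\<close>-norm inequality.
  For minimality, the maximising \<open>W\<close> can be taken unitary, and a unitary is diagonal in some
  orthonormal basis \<open>(u\<^sub>i)\<close>; hence \<open>\<parallel>X\<parallel>\<^sub>1 \<le> \<Sum> |\<langle>u\<^sub>i, X u\<^sub>i\<rangle>|\<close>.
  Pinching with the rank-one projections \<open>P\<^sub>i = u\<^sub>i u\<^sub>i\<^sup>*\<close> turns each term into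
  \<open>N (P\<^sub>i X P\<^sub>i) = |\<langle>u\<^sub>i, X u\<^sub>i\<rangle>| N (P\<^sub>i) \<ge> |\<langle>u\<^sub>i, X u\<^sub>i\<rangle>| \<omega> (P\<^sub>i)\<close> with \<open>\<omega> (P\<^sub>i) = 1\<close>,
  and the \<open>L\<close>-norm property bounds their sum by \<open>N X\<close>.
  The spectral theorem for commuting pairs of Hermitian matrices, needed in both halves, comes
  from maximising the Rayleigh quotient on invariant subspaces.
\<close>

section \<open>Complex inner product and adjoints\<close>

definition outer :: "complex^'n \<Rightarrow> complex^'n \<Rightarrow> complex^'n^'n" where
  "outer u v = (\<chi> i j. u$i * cnj (v$j))"

lemma cinner_add_right: "cinner x (y + z) = cinner x y + cinner x z"
  by (simp add: cinner_def sum.distrib distrib_left)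

lemma cinner_add_left: "cinner (x + y) z = cinner x z + cinner y z"
  by (simp add: cinner_def sum.distrib distrib_right)

lemma cinner_diff_right: "cinner x (y - z) = cinner x y - cinner x z"
  by (simp add: cinner_def sum_subtractf right_diff_distrib)

lemma cinner_diff_left: "cinner (x - y) z = cinner x z - cinner y z"
  by (simp add: cinner_def sum_subtractf left_diff_distrib)

lemma cinner_minus_right: "cinner x (- y) = - cinner x y"
  by (simp add: cinner_def sum_negf)

lemma cinner_scale_right: "cinner x (c *s y) = c * cinner x y"
  by (simp add: cinner_def sum_distrib_left mult_ac)

lemma cinner_scale_left: "cinner (c *s x) y = cnj c * cinner x y"
  by (simp add: cinner_def sum_distrib_left mult_ac)

lemma cinner_zero_right [simp]: "cinner x 0 = 0"
  by (simp add: cinner_def)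

lemma cinner_zero_left [simp]: "cinner 0 x = 0"
  by (simp add: cinner_def)

lemma cinner_commute: "cinner y x = cnj (cinner x y)"
  by (simp add: cinner_def mult.commute)

lemma cinner_sum_right: "cinner x (\<Sum>b\<in>B. f b) = (\<Sum>b\<in>B. cinner x (f b))"
  by (simp add: cinner_def sum_distrib_left) (rule sum.swap)

lemma norm_vec_power2: "(norm (x::complex^'n))^2 = (\<Sum>i\<in>UNIV. (cmod (x$i))^2)"
  by (simp add: norm_vec_def L2_set_def sum_nonneg)

lemma cnj_mult_self: "cnj z * z = of_real ((cmod z)^2)"
  by (subst mult.commute) (rule complex_norm_square[symmetric])

lemma cinner_self: "cinner x x = of_real ((norm x)^2)"
proof -
  have "cinner x x = (\<Sum>i\<in>UNIV. of_real ((cmod (x$i))^2))"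
    unfolding cinner_def by (intro sum.cong refl cnj_mult_self)
  also have "\<dots> = of_real ((norm x)^2)"
    by (simp only: norm_vec_power2 of_real_sum)
  finally show ?thesis .
qed

lemma cinner_self_eq_0_iff [simp]: "cinner x x = 0 \<longleftrightarrow> x = 0"
  by (simp add: cinner_self)

lemma cinner_eqI: "(\<And>y. cinner a y = cinner b y) \<Longrightarrow> a = b"
  by (metis cinner_diff_left cinner_self_eq_0_iff diff_self eq_iff_diff_eq_0)

lemma inner_eq_Re_cinner: "inner x y = Re (cinner x y)"
  by (simp add: inner_vec_def cinner_def inner_complex_def)

lemma scaleR_eq_scale: "r *\<^sub>R (x::complex^'n) = complex_of_real r *s x"
  by (simp add: scaleR_vec_def vector_scalar_mult_def scaleR_conv_of_real)

lemma norm_scale: "norm (c *s (x::complex^'n)) = cmod c * norm x"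
proof -
  have "(norm (c *s x))^2 = (cmod c * norm x)^2"
    by (simp add: norm_vec_power2 norm_mult power_mult_distrib sum_distrib_left)
  then show ?thesis
    by (simp add: power2_eq_iff_nonneg)
qed

lemma normalize_unit:
  assumes "x \<noteq> 0"
  shows "norm (complex_of_real (1 / norm x) *s x) = 1"
  using assms by (simp add: norm_scale norm_divide)

text \<open>Cauchy--Schwarz, obtained from the real one after rotating \<open>y\<close> by a unit scalar.\<close>
lemma norm_cinner_le: "cmod (cinner x y) \<le> norm x * norm y"
proof (cases "cinner x y = 0")
  case False
  define c where "c = cnj (cinner x y) / cmod (cinner x y)"
  have "cinner x (c *s y) = of_real (cmod (cinner x y))"
    using False by (simp add: cinner_scale_right c_def cnj_mult_self power2_eq_square)
  then have "cmod (cinner x y) = inner x (c *s y)"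
    by (simp add: inner_eq_Re_cinner)
  also have "\<dots> \<le> norm x * norm (c *s y)"
    by (rule norm_cauchy_schwarz)
  also have "\<dots> = norm x * norm y"
    using False by (simp add: norm_scale c_def norm_divide)
  finally show ?thesis .
qed simp

lemma cinner_adj: "cinner x (A *v y) = cinner (madj A *v x) y"
  unfolding cinner_def madj_def matrix_vector_mult_def
  by (simp add: sum_distrib_left sum_distrib_right cnj_sum mult_ac) (rule sum.swap)

lemma madj_madj [simp]: "madj (madj A) = A"
  by (simp add: madj_def vec_eq_iff)

lemma madj_mult: "madj (A ** B) = madj B ** madj A"
  unfolding madj_def matrix_matrix_mult_def by (simp add: vec_eq_iff cnj_sum mult.commute)

lemma madj_add: "madj (A + B) = madj A + madj B"
  by (simp add: madj_def vec_eq_iff)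

lemma madj_diff: "madj (A - B) = madj A - madj B"
  by (simp add: madj_def vec_eq_iff)

lemma madj_sum: "madj (\<Sum>b\<in>B. f b) = (\<Sum>b\<in>B. madj (f b))"
  by (simp add: madj_def vec_eq_iff cnj_sum)

lemma madj_outer: "madj (outer u v) = outer v u"
  by (simp add: madj_def outer_def vec_eq_iff mult.commute)

lemma mscale_mult_vec: "mscale c A *v x = c *s (A *v x)"
  unfolding mscale_def matrix_vector_mult_def vector_scalar_mult_def
  by (simp add: vec_eq_iff sum_distrib_left mult.assoc)

lemma outer_mult_vec: "outer u v *v x = cinner v x *s u"
  unfolding outer_def matrix_vector_mult_def cinner_def vector_scalar_mult_def
  by (simp add: vec_eq_iff sum_distrib_left sum_distrib_right mult_ac)

lemma sum_mult_vec: "(\<Sum>b\<in>B. f b) *v x = (\<Sum>b\<in>B. f b *v x)"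
  by (induction B rule: infinite_finite_induct) (auto simp: matrix_vector_mult_add_rdistrib)

lemma mult_vec_sum: "A *v (\<Sum>b\<in>B. f b) = (\<Sum>b\<in>B. A *v f b)"
  by (induction B rule: infinite_finite_induct) (auto simp: matrix_vector_right_distrib)

section \<open>Orthonormal bases\<close>

definition orthonormal :: "(complex^'n) set \<Rightarrow> bool" where
  "orthonormal U \<longleftrightarrow> (\<forall>u\<in>U. \<forall>v\<in>U. cinner u v = (if u = v then 1 else 0))"

definition onb :: "(complex^'n) set \<Rightarrow> bool" where
  "onb U \<longleftrightarrow> finite U \<and> orthonormal U \<and> card U = CARD('n)"

lemma orthonormal_cinner_self: "orthonormal U \<Longrightarrow> u \<in> U \<Longrightarrow> cinner u u = 1"
  by (simp add: orthonormal_def)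

lemma orthonormal_cinner: "orthonormal U \<Longrightarrow> u \<in> U \<Longrightarrow> v \<in> U \<Longrightarrow> u \<noteq> v \<Longrightarrow> cinner u v = 0"
  by (simp add: orthonormal_def)

lemma onb_cinner: "onb U \<Longrightarrow> u \<in> U \<Longrightarrow> v \<in> U \<Longrightarrow> cinner u v = (if u = v then 1 else 0)"
  by (simp add: onb_def orthonormal_def)

lemma onb_norm:
  assumes "onb U" "u \<in> U"
  shows "norm u = 1"
proof -
  have "(norm u)^2 = 1"
    using onb_cinner[OF assms assms(2)] cinner_self[of u] by (metis of_real_eq_1_iff)
  then show ?thesis
    by (smt (verit) norm_ge_zero power2_eq_1_iff)
qed

lemma orthonormal_insert:
  assumes "orthonormal V" and "norm x = 1" and perp: "\<forall>v\<in>V. cinner v x = 0"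
  shows "orthonormal (insert x V)" and "x \<notin> V"
proof -
  have xx: "cinner x x = 1"
    using assms(2) by (simp add: cinner_self)
  then show "x \<notin> V"
    using perp by force
  have "\<forall>v\<in>V. cinner x v = 0"
    using perp by (metis cinner_commute complex_cnj_zero)
  then show "orthonormal (insert x V)"
    using assms(1) perp xx \<open>x \<notin> V\<close> unfolding orthonormal_def by auto
qed

lemma orthonormal_realification_orthogonal:
  assumes o: "orthonormal (U::(complex^'n) set)"
  shows "pairwise orthogonal (U \<union> (\<lambda>u. \<i> *s u) ` U)"
proof -
  have uu: "cinner u u = 1" if "u \<in> U" for u
    using o that by (rule orthonormal_cinner_self)
  have uv: "cinner u v = 0" if "u \<in> U" "v \<in> U" "u \<noteq> v" for u v
    using o that by (rule orthonormal_cinner)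
  have "a \<bullet> b = 0" if a: "a \<in> U \<union> (\<lambda>u. \<i> *s u) ` U" and b: "b \<in> U \<union> (\<lambda>u. \<i> *s u) ` U"
    and ab: "a \<noteq> b" for a b
  proof (cases "a \<in> U"; cases "b \<in> U")
    assume "a \<in> U" "b \<in> U"
    then show ?thesis
      using ab uv by (simp add: inner_eq_Re_cinner)
  next
    assume "a \<in> U" "b \<notin> U"
    then obtain v where "v \<in> U" "b = \<i> *s v"
      using b by auto
    then show ?thesis
      using \<open>a \<in> U\<close> uu uv by (cases "a = v") (auto simp: inner_eq_Re_cinner cinner_scale_right)
  next
    assume "a \<notin> U" "b \<in> U"
    then obtain u where "u \<in> U" "a = \<i> *s u"
      using a by auto
    then show ?thesis
      using \<open>b \<in> U\<close> uu uv by (cases "b = u") (auto simp: inner_eq_Re_cinner cinner_scale_left)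
  next
    assume "a \<notin> U" "b \<notin> U"
    then obtain u v where "u \<in> U" "a = \<i> *s u" "v \<in> U" "b = \<i> *s v"
      using a b by auto
    then show ?thesis
      using ab uv by (simp add: inner_eq_Re_cinner cinner_scale_left cinner_scale_right)
  qed
  then show ?thesis
    by (simp add: pairwise_def orthogonal_def)
qed

text \<open>
  Over the reals, an orthonormal set \<open>U\<close> of \<open>\<complex>\<^sup>n\<close> together with \<open>\<i> U\<close> is orthonormal in
  \<open>\<real>\<^sup>2\<^sup>n\<close>; this is how the dimension count of the real library transfers.\<close>
lemma orthonormal_realification:
  assumes o: "orthonormal (U::(complex^'n) set)"
  defines "V \<equiv> U \<union> (\<lambda>u. \<i> *s u) ` U"
  shows "independent V" and "finite U" and "card V = 2 * card U"
proof -
  have uu: "cinner u u = 1" if "u \<in> U" for u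
    using o that by (rule orthonormal_cinner_self)
  have "pairwise orthogonal V"
    unfolding V_def by (rule orthonormal_realification_orthogonal[OF o])
  moreover have "0 \<notin> V"
    using uu by (force simp: V_def)
  ultimately show ind: "independent V"
    by (rule pairwise_orthogonal_independent)
  then have "finite V"
    using independent_imp_finite by blast
  then show fU: "finite U"
    by (simp add: V_def)
  have "inj_on (\<lambda>u. \<i> *s u) U"
    by (rule inj_onI) (simp add: vec_eq_iff)
  moreover have "U \<inter> (\<lambda>u. \<i> *s u) ` U = {}"
  proof (rule ccontr)
    assume "U \<inter> (\<lambda>u. \<i> *s u) ` U \<noteq> {}"
    then obtain u where u: "u \<in> U" "\<i> *s u \<in> U"
      by blast
    then have "cinner u (\<i> *s u) = \<i>"
      using uu by (simp add: cinner_scale_right)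
    then show False
      using o u by (auto simp: orthonormal_def split: if_splits)
  qed
  ultimately show "card V = 2 * card U"
    unfolding V_def using fU by (simp add: card_Un_disjoint card_image)
qed

lemma orthonormal_finite: "orthonormal U \<Longrightarrow> finite U"
  by (rule orthonormal_realification)

lemma card_orthonormal_le: "orthonormal (U::(complex^'n) set) \<Longrightarrow> card U \<le> CARD('n)"
  using orthonormal_realification[of U] independent_bound by fastforce

lemma cinner_orthogonal_projection:
  assumes o: "orthonormal U" and w: "w \<in> U"
  shows "cinner w (y - (\<Sum>u\<in>U. cinner u y *s u)) = 0"
proof -
  have "cinner w (\<Sum>u\<in>U. cinner u y *s u) = (\<Sum>u\<in>U. if u = w then cinner u y else 0)"
    using o w by (auto simp: cinner_sum_right cinner_scale_right orthonormal_def intro: sum.cong)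
  also have "\<dots> = cinner w y"
    using orthonormal_finite[OF o] w by simp
  finally show ?thesis
    by (simp add: cinner_diff_right)
qed

lemma exists_unit_orthogonal_to_residual:
  assumes o: "orthonormal (U::(complex^'n) set)" and "y \<noteq> (\<Sum>u\<in>U. cinner u y *s u)"
  shows "\<exists>x. norm x = 1 \<and> (\<forall>u\<in>U. cinner u x = 0)"
proof -
  define z where "z = y - (\<Sum>u\<in>U. cinner u y *s u)"
  have "z \<noteq> 0"
    using assms(2) by (simp add: z_def)
  moreover have "\<forall>u\<in>U. cinner u z = 0"
    using cinner_orthogonal_projection[OF o] by (simp add: z_def)
  ultimately show ?thesis
    by (intro exI[of _ "complex_of_real (1 / norm z) *s z"] conjI normalize_unit)
       (simp_all add: cinner_scale_right)
qed

lemma exists_unit_orthogonal_if_card_less: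
  assumes o: "orthonormal (U::(complex^'n) set)" and c: "card U < CARD('n)"
  shows "\<exists>x. norm x = 1 \<and> (\<forall>u\<in>U. cinner u x = 0)"
proof -
  define V where "V = U \<union> (\<lambda>u. \<i> *s u) ` U"
  note real = orthonormal_realification[OF o, folded V_def]
  have "span V \<noteq> UNIV"
  proof
    assume "span V = UNIV"
    then have "dim (UNIV::(complex^'n) set) \<le> card V"
      by (metis dim_le_card dim_span independent_imp_finite real(1) order_refl)
    then show False
      using c real(3) by simp
  qed
  then obtain y where y: "y \<notin> span V"
    by blast
  have "(c::complex) *s u \<in> span V" if "u \<in> U" for c u
  proof -
    have "c *s u = Re c *\<^sub>R u + Im c *\<^sub>R (\<i> *s u)"
      by (simp add: vec_eq_iff complex_eq_iff scaleR_vec_def)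
    then show ?thesis
      using that by (simp add: V_def span_add span_mul span_base span_scale)
  qed
  then have "(\<Sum>u\<in>U. cinner u y *s u) \<in> span V"
    by (intro span_sum) auto
  then show ?thesis
    using y exists_unit_orthogonal_to_residual[OF o, of y] by metis
qed

lemma onb_expansion:
  assumes b: "onb (U::(complex^'n) set)"
  shows "y = (\<Sum>u\<in>U. cinner u y *s u)"
proof (rule ccontr)
  assume "y \<noteq> (\<Sum>u\<in>U. cinner u y *s u)"
  then obtain x where x: "norm x = 1" "\<forall>u\<in>U. cinner u x = 0"
    using exists_unit_orthogonal_to_residual[of U y] b by (auto simp: onb_def)
  have "card (insert x U) \<le> CARD('n)"
    using b orthonormal_insert[OF _ x] card_orthonormal_le[of "insert x U"] by (auto simp: onb_def)
  then show False
    using b orthonormal_insert(2)[OF _ x] by (simp add: onb_def)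
qed

lemma onb_matrix_eq:
  assumes U: "onb U" and e: "\<forall>u\<in>U. A *v u = B *v u"
  shows "A = B"
proof -
  have "A *v x = B *v x" for x
    using e by (subst (1 2) onb_expansion[OF U, of x]) (simp add: mult_vec_sum vector_scalar_commute)
  then show ?thesis
    by (simp add: matrix_eq)
qed

lemma onb_sum_outer:
  assumes "onb (U::(complex^'n) set)"
  shows "(\<Sum>u\<in>U. outer u u) = mat 1"
proof -
  have "(\<Sum>u\<in>U. outer u u) *v x = mat 1 *v x" for x
    by (simp only: sum_mult_vec outer_mult_vec matrix_vector_mul_lid)
       (rule onb_expansion[OF assms, symmetric])
  then show ?thesis
    by (subst matrix_eq) blast
qed

lemma onb_diagonal_mult_vec:
  assumes U: "onb U" and u: "u \<in> U"
  shows "(\<Sum>v\<in>U. outer (f v) v) *v u = f u"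
proof -
  have "(\<Sum>v\<in>U. outer (f v) v) *v u = (\<Sum>v\<in>U. if v = u then f u else 0)"
    using U u by (auto simp: sum_mult_vec outer_mult_vec onb_cinner intro: sum.cong)
  then show ?thesis
    using U u by (simp add: onb_def)
qed

lemma trace_eq_sum_onb:
  assumes "onb (U::(complex^'n) set)"
  shows "trace A = (\<Sum>u\<in>U. cinner u (A *v u))"
proof -
  have d: "(\<Sum>u\<in>U. u$j * cnj (u$i)) = (if j = i then 1 else 0)" for i j
    using arg_cong[OF onb_sum_outer[OF assms], of "\<lambda>M. M $ j $ i"]
    by (simp add: outer_def mat_def)
  have "(\<Sum>u\<in>U. cinner u (A *v u)) = (\<Sum>u\<in>U. \<Sum>i\<in>UNIV. \<Sum>j\<in>UNIV. A$i$j * (u$j * cnj (u$i)))"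
    unfolding cinner_def matrix_vector_mult_def by (simp add: sum_distrib_left mult_ac)
  also have "\<dots> = (\<Sum>i\<in>UNIV. \<Sum>u\<in>U. \<Sum>j\<in>UNIV. A$i$j * (u$j * cnj (u$i)))"
    by (rule sum.swap)
  also have "\<dots> = (\<Sum>i\<in>UNIV. \<Sum>j\<in>UNIV. A$i$j * (\<Sum>u\<in>U. u$j * cnj (u$i)))"
    by (simp only: sum_distrib_left) (intro sum.cong refl sum.swap)
  also have "\<dots> = trace A"
    by (simp add: d trace_def if_distrib cong: if_cong)
  finally show ?thesis ..
qed

lemma trace_mult_eq_sum_onb:
  "onb U \<Longrightarrow> trace (W ** X) = (\<Sum>u\<in>U. cinner (madj W *v u) (X *v u))"
  by (simp add: trace_eq_sum_onb cinner_adj matrix_vector_mul_assoc[symmetric])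

lemma orthonormal_extend_onb_pred:
  assumes "orthonormal (V::(complex^'n) set)" and "\<forall>v\<in>V. P v"
    and step: "\<And>V. orthonormal V \<Longrightarrow> \<forall>v\<in>V. P v \<Longrightarrow> card V < CARD('n) \<Longrightarrow>
                 \<exists>x. norm x = 1 \<and> (\<forall>v\<in>V. cinner v x = 0) \<and> P x"
  shows "\<exists>U. V \<subseteq> U \<and> onb U \<and> (\<forall>u\<in>U. P u)"
  using assms(1,2)
proof (induction "CARD('n) - card V" arbitrary: V rule: less_induct)
  case less
  show ?case
  proof (cases "card V < CARD('n)")
    case False
    then show ?thesis
      using less.prems card_orthonormal_le[of V] orthonormal_finite[of V] by (auto simp: onb_def)
  next
    case True
    obtain x where x: "norm x = 1" "\<forall>v\<in>V. cinner v x = 0" "P x"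
      using step[OF less.prems True] by blast
    note ins = orthonormal_insert[OF less.prems(1) x(1,2)]
    have "CARD('n) - card (insert x V) < CARD('n) - card V"
      using ins(2) orthonormal_finite[OF less.prems(1)] True by simp
    with less.hyps[OF this ins(1)] less.prems(2) x(3) show ?thesis
      by blast
  qed
qed

lemma orthonormal_extend_to_onb:
  "orthonormal (V::(complex^'n) set) \<Longrightarrow> \<exists>U. V \<subseteq> U \<and> onb U"
  using orthonormal_extend_onb_pred[of V "\<lambda>_. True"] exists_unit_orthogonal_if_card_less by auto

section \<open>Spectral theorem for commuting Hermitian matrices\<close>

definition herm :: "complex^'n^'n \<Rightarrow> bool" where
  "herm H \<longleftrightarrow> madj H = H"

definition csubspace :: "(complex^'n) set \<Rightarrow> bool" where
  "csubspace T \<longleftrightarrow> 0 \<in> T \<and> (\<forall>x\<in>T. \<forall>y\<in>T. x + y \<in> T) \<and> (\<forall>c. \<forall>x\<in>T. c *s x \<in> T)"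

lemma csubspace_closed: "csubspace T \<Longrightarrow> closed T"
  by (rule closed_subspace) (simp add: subspace_def csubspace_def scaleR_eq_scale)

lemma herm_cinner: "herm H \<Longrightarrow> cinner x (H *v y) = cinner (H *v x) y"
  by (simp add: herm_def cinner_adj)

lemma herm_zero: "herm 0"
  by (simp add: herm_def madj_def vec_eq_iff)

lemma linear_coeff_eq_0:
  fixes b c :: real
  assumes "\<And>s. 0 \<le> s * b + s^2 * c"
  shows "b = 0"
proof (rule ccontr)
  assume "b \<noteq> 0"
  define d where "d = \<bar>c\<bar> + 1"
  have d: "d > 0" "c / d < 1"
    by (simp_all add: d_def divide_less_eq, linarith)
  have "(- b / d) * b + (- b / d)^2 * c = (b^2 / d) * (c / d - 1)"
    using d by (simp add: power2_eq_square field_simps)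
  also have "\<dots> < 0"
    using \<open>b \<noteq> 0\<close> d by (intro mult_pos_neg) auto
  finally show False
    using assms[of "- b / d"] by simp
qed

text \<open>
  Perturbing \<open>u\<close> to \<open>u + s G u\<close> gives a quadratic in \<open>s\<close> that is nonnegative and has
  linear coefficient \<open>2 \<parallel>G u\<parallel>\<^sup>2\<close>.\<close>
lemma herm_form_eq_0_imp_kernel:
  assumes G: "herm G" and T: "csubspace T" and u: "u \<in> T" "G *v u \<in> T"
    and nonneg: "\<And>x. x \<in> T \<Longrightarrow> Re (cinner x (G *v x)) \<ge> 0"
    and zero: "Re (cinner u (G *v u)) = 0"
  shows "G *v u = 0"
proof -
  define w where "w = G *v u"
  have "0 \<le> s * (2 * (norm w)^2) + s^2 * Re (cinner w (G *v w))" for s :: real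
  proof -
    let ?r = "complex_of_real s"
    have "u + ?r *s w \<in> T"
      using T u by (simp add: csubspace_def w_def)
    moreover have "cinner (u + ?r *s w) (G *v (u + ?r *s w))
        = cinner u (G *v u) + ?r * cinner w w + ?r * cinner w w + ?r * ?r * cinner w (G *v w)"
      using herm_cinner[OF G, of u w]
      by (simp add: matrix_vector_right_distrib vector_scalar_commute cinner_add_left
          cinner_add_right cinner_scale_left cinner_scale_right w_def algebra_simps)
    ultimately show ?thesis
      using nonneg[of "u + ?r *s w"] zero by (simp add: cinner_self power2_eq_square)
  qed
  then have "2 * (norm w)^2 = 0"
    by (rule linear_coeff_eq_0)
  then show ?thesis
    by (simp add: w_def)
qed

lemma rayleigh_quotient_attains_max:
  assumes T: "csubspace T" and nz: "\<exists>x\<in>T. x \<noteq> 0"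
  shows "\<exists>u\<in>T. norm u = 1 \<and>
           (\<forall>x\<in>T. Re (cinner x (H *v x)) \<le> Re (cinner u (H *v u)) * (norm x)^2)"
proof -
  define f where "f x = Re (cinner x (H *v x))" for x
  define K where "K = T \<inter> sphere 0 1"
  have scale: "\<And>c x. x \<in> T \<Longrightarrow> c *s x \<in> T"
    using T by (auto simp: csubspace_def)
  have "compact K"
    unfolding K_def using csubspace_closed[OF T] by (intro closed_Int_compact) auto
  moreover obtain x0 where "x0 \<in> T" "x0 \<noteq> 0"
    using nz by blast
  then have "complex_of_real (1 / norm x0) *s x0 \<in> K"
    using scale by (simp add: K_def norm_scale norm_divide)
  then have "K \<noteq> {}"
    by blast
  moreover have "continuous_on K f"
    unfolding f_def cinner_def matrix_vector_mult_def
    by (simp only: vec_lambda_beta) (intro continuous_intros)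
  ultimately obtain u where uK: "u \<in> K" and umax: "\<forall>y\<in>K. f y \<le> f u"
    using continuous_attains_sup by blast
  have "f x \<le> f u * (norm x)^2" if "x \<in> T" for x
  proof (cases "x = 0")
    case False
    define r where "r = 1 / norm x"
    have "complex_of_real r *s x \<in> K"
      using that scale False by (simp add: K_def r_def norm_scale norm_divide)
    then have "f (complex_of_real r *s x) \<le> f u"
      using umax by blast
    moreover have "f (complex_of_real r *s x) = r^2 * f x"
      by (simp add: f_def vector_scalar_commute cinner_scale_left cinner_scale_right power2_eq_square)
    ultimately show ?thesis
      using False by (simp add: r_def power_divide divide_le_eq mult.commute)
  qed (simp add: f_def)
  then show ?thesis
    using uK by (auto simp: K_def f_def)
qed

text \<open>
  At a maximiser \<open>u\<close> of the Rayleigh quotient with maximum \<open>l\<close>, the form of \<open>l I - H\<close> is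
  nonnegative on \<open>T\<close> and vanishes at \<open>u\<close>.\<close>
lemma herm_eigenvector_in_invariant_subspace:
  assumes H: "herm H" and T: "csubspace T" and inv: "\<forall>x\<in>T. H *v x \<in> T" and nz: "\<exists>x\<in>T. x \<noteq> 0"
  shows "\<exists>u\<in>T. norm u = 1 \<and> (\<exists>l::real. H *v u = complex_of_real l *s u)"
proof -
  obtain u where uT: "u \<in> T" and nu: "norm u = 1"
    and rayleigh: "\<And>x. x \<in> T \<Longrightarrow> Re (cinner x (H *v x)) \<le> Re (cinner u (H *v u)) * (norm x)^2"
    using rayleigh_quotient_attains_max[OF T nz] by blast
  define l where "l = Re (cinner u (H *v u))"
  define G where "G = mscale (complex_of_real l) (mat 1) - H"
  have "madj (mscale (complex_of_real l) (mat 1)) = mscale (complex_of_real l) (mat 1)"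
    by (simp add: madj_def mscale_def mat_def vec_eq_iff)
  then have G: "herm G"
    using H by (simp add: herm_def G_def madj_diff)
  have Gx: "G *v x = complex_of_real l *s x - H *v x" for x
    by (simp add: G_def matrix_vector_mult_diff_rdistrib mscale_mult_vec)
  have form: "Re (cinner x (G *v x)) = l * (norm x)^2 - Re (cinner x (H *v x))" for x
    by (simp add: Gx cinner_diff_right cinner_scale_right cinner_self)
  have scale_closed: "c *s x \<in> T" if "x \<in> T" for c x
    using T that by (simp add: csubspace_def)
  have add_closed: "x + y \<in> T" if "x \<in> T" "y \<in> T" for x y
    using T that by (simp add: csubspace_def)
  have "G *v u = complex_of_real l *s u + (- 1) *s (H *v u)"
    unfolding Gx by (simp add: vec_eq_iff)
  then have "G *v u \<in> T"
    using inv uT by (simp only:) (intro add_closed scale_closed; blast)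
  moreover have "Re (cinner x (G *v x)) \<ge> 0" if "x \<in> T" for x
    using rayleigh[OF that] form[of x] by (simp add: l_def)
  moreover have "Re (cinner u (G *v u)) = 0"
    using form[of u] nu l_def by simp
  ultimately have "G *v u = 0"
    by (rule herm_form_eq_0_imp_kernel[OF G T uT])
  then have "H *v u = complex_of_real l *s u"
    using Gx[of u] by simp
  then show ?thesis
    using uT nu by blast
qed

definition common_eigenvector :: "complex^'n^'n \<Rightarrow> complex^'n^'n \<Rightarrow> complex^'n \<Rightarrow> bool" where
  "common_eigenvector H K u \<longleftrightarrow>
     (\<exists>a::real. H *v u = complex_of_real a *s u) \<and> (\<exists>b::real. K *v u = complex_of_real b *s u)"

lemma herm_common_eigenvector_in_invariant_subspace:
  assumes H: "herm H" and K: "herm K" and com: "H ** K = K ** H"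
    and T: "csubspace T" and invH: "\<forall>x\<in>T. H *v x \<in> T" and invK: "\<forall>x\<in>T. K *v x \<in> T"
    and nz: "\<exists>x\<in>T. x \<noteq> 0"
  shows "\<exists>u\<in>T. norm u = 1 \<and> common_eigenvector H K u"
proof -
  obtain u0 l where u0: "u0 \<in> T" "norm u0 = 1" "H *v u0 = complex_of_real l *s u0"
    using herm_eigenvector_in_invariant_subspace[OF H T invH nz] by blast
  define E where "E = {x\<in>T. H *v x = complex_of_real l *s x}"
  have E: "csubspace E"
    using T unfolding csubspace_def E_def
    by (auto simp: matrix_vector_right_distrib vector_add_ldistrib vector_scalar_commute
        vector_smult_assoc mult.commute)
  have "K *v x \<in> E" if "x \<in> E" for x
  proof -
    have "H *v (K *v x) = K *v (H *v x)"
      by (simp add: matrix_vector_mul_assoc com)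
    then show ?thesis
      using that invK by (simp add: E_def vector_scalar_commute)
  qed
  moreover have "\<exists>x\<in>E. x \<noteq> 0"
    using u0 by (auto simp: E_def)
  ultimately obtain u where "u \<in> E" "norm u = 1" "\<exists>b::real. K *v u = complex_of_real b *s u"
    using herm_eigenvector_in_invariant_subspace[OF K E] by blast
  then show ?thesis
    by (auto simp: E_def common_eigenvector_def)
qed

lemma commuting_herm_simultaneous_onb:
  assumes H: "herm H" and K: "herm K" and com: "H ** K = K ** H"
  shows "\<exists>U::(complex^'n) set. onb U \<and> (\<forall>u\<in>U. common_eigenvector H K u)"
proof -
  have "\<exists>x. norm x = 1 \<and> (\<forall>v\<in>V. cinner v x = 0) \<and> common_eigenvector H K x"
    if V: "orthonormal V" "\<forall>v\<in>V. common_eigenvector H K v" "card V < CARD('n)" for V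
  proof -
    define T where "T = {x. \<forall>v\<in>V. cinner v x = 0}"
    have T: "csubspace T"
      unfolding csubspace_def T_def by (simp add: cinner_add_right cinner_scale_right)
    have inv: "\<forall>x\<in>T. M *v x \<in> T"
      if "herm M" "\<forall>v\<in>V. \<exists>a::real. M *v v = complex_of_real a *s v" for M
      using that by (auto simp: T_def herm_cinner cinner_scale_left)
    have "\<exists>x\<in>T. x \<noteq> 0"
      using exists_unit_orthogonal_if_card_less[OF V(1,3)] by (force simp: T_def)
    then show ?thesis
      using herm_common_eigenvector_in_invariant_subspace[OF H K com T] inv[OF H] inv[OF K] V(2)
      by (auto simp: common_eigenvector_def T_def)
  qed
  then show ?thesis
    using orthonormal_extend_onb_pred[of "{}" "common_eigenvector H K"] by (auto simp: orthonormal_def)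
qed

lemma herm_spectral:
  assumes "herm H"
  shows "\<exists>U::(complex^'n) set. onb U \<and> (\<forall>u\<in>U. \<exists>a::real. H *v u = complex_of_real a *s u)"
  using commuting_herm_simultaneous_onb[OF assms herm_zero] by (auto simp: common_eigenvector_def)

section \<open>Trace norm and trace duality\<close>

definition unitary :: "complex^'n^'n \<Rightarrow> bool" where
  "unitary W \<longleftrightarrow> madj W ** W = mat 1 \<and> W ** madj W = mat 1"

lemma psd_herm:
  assumes "psd Q"
  shows "herm Q"
proof -
  define B where "B x y = cinner x (Q *v y)" for x y
  have real: "Im (B x x) = 0" for x
    using assms by (simp add: psd_def B_def)
  have add: "B (x + y) z = B x z + B y z" "B x (y + z) = B x y + B x z" for x y z
    by (simp_all add: B_def cinner_add_left cinner_add_right matrix_vector_right_distrib)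
  have scale: "B x (c *s y) = c * B x y" "B (c *s x) y = cnj c * B x y" for x y c
    by (simp_all add: B_def cinner_scale_left cinner_scale_right vector_scalar_commute)
  have "B x y = cnj (B y x)" for x y
  proof -
    have "Im (B x y + B y x) = 0"
      using real[of "x + y"] real[of x] real[of y] by (simp add: add)
    moreover have "Im (\<i> * B x y - \<i> * B y x) = 0"
      using real[of "x + \<i> *s y"] real[of x] real[of y] by (simp add: add scale)
    ultimately show ?thesis
      by (simp add: complex_eq_iff)
  qed
  then have "madj Q *v x = Q *v x" for x
    by (intro cinner_eqI) (metis B_def cinner_adj cinner_commute)
  then show ?thesis
    by (simp add: herm_def matrix_eq)
qed

lemma psd_sqrt_on_eigenvector:
  assumes Q: "psd Q" and QQ: "Q ** Q = M"
    and Mu: "M *v u = complex_of_real (s^2) *s u" and s: "s \<ge> 0"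
  shows "Q *v u = complex_of_real s *s u"
proof -
  define y where "y = Q *v u - complex_of_real s *s u"
  have "Q *v (Q *v u) = complex_of_real (s^2) *s u"
    using Mu QQ by (simp add: matrix_vector_mul_assoc)
  then have Qy: "Q *v y = - (complex_of_real s *s y)"
    by (simp add: y_def matrix_vector_mult_diff_distrib vector_scalar_commute vector_ssub_ldistrib
        vector_smult_assoc power2_eq_square)
  show ?thesis
  proof (cases "s = 0")
    case True
    then have "cinner (Q *v u) (Q *v u) = 0"
      using Qy herm_cinner[OF psd_herm[OF Q], of u "Q *v u"] by (simp add: y_def)
    then show ?thesis
      using True by simp
  next
    case False
    have "- s * (norm y)^2 = Re (cinner y (Q *v y))"
      using Qy by (simp add: cinner_scale_right cinner_minus_right cinner_self)
    also have "\<dots> \<ge> 0"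
      using Q by (simp add: psd_def)
    finally have "y = 0"
      using False s by (simp add: mult_le_0_iff)
    then show ?thesis
      by (simp add: y_def)
  qed
qed

lemma psd_onb_diagonal:
  assumes U: "onb U" and s: "\<forall>u\<in>U. s u \<ge> 0"
  shows "psd (\<Sum>u\<in>U. outer (complex_of_real (s u) *s u) u)"
  unfolding psd_def
proof
  fix x
  have "cinner x ((\<Sum>u\<in>U. outer (complex_of_real (s u) *s u) u) *v x)
      = (\<Sum>u\<in>U. complex_of_real (s u * (cmod (cinner u x))^2))"
    unfolding sum_mult_vec outer_mult_vec cinner_sum_right
  proof (intro sum.cong refl)
    fix u
    show "cinner x (cinner u x *s (complex_of_real (s u) *s u))
        = complex_of_real (s u * (cmod (cinner u x))^2)"
      using complex_norm_square[of "cinner u x"] cinner_commute[of x u]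
      by (simp add: cinner_scale_right mult_ac)
  qed
  then show "Im (cinner x ((\<Sum>u\<in>U. outer (complex_of_real (s u) *s u) u) *v x)) = 0 \<and>
      0 \<le> Re (cinner x ((\<Sum>u\<in>U. outer (complex_of_real (s u) *s u) u) *v x))"
    using s by (simp add: sum_nonneg)
qed

lemma mabs_eq_onb_diagonal:
  assumes U: "onb U" and s: "\<forall>u\<in>U. s u \<ge> 0"
    and eig: "\<forall>u\<in>U. (madj X ** X) *v u = complex_of_real ((s u)^2) *s u"
  shows "mabs X = (\<Sum>u\<in>U. outer (complex_of_real (s u) *s u) u)"
proof -
  define P where "P = (\<Sum>u\<in>U. outer (complex_of_real (s u) *s u) u)"
  have Pu: "P *v u = complex_of_real (s u) *s u" if "u \<in> U" for u
    unfolding P_def using onb_diagonal_mult_vec[OF U that] .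
  have "P ** P = madj X ** X"
  proof (rule onb_matrix_eq[OF U], intro ballI)
    fix u assume u: "u \<in> U"
    have "(P ** P) *v u = complex_of_real ((s u)^2) *s u"
      by (simp add: matrix_vector_mul_assoc[symmetric] Pu[OF u] vector_scalar_commute
          vector_smult_assoc power2_eq_square)
    then show "(P ** P) *v u = (madj X ** X) *v u"
      using eig u by simp
  qed
  moreover have "Q = P" if "psd Q" "Q ** Q = madj X ** X" for Q
  proof (rule onb_matrix_eq[OF U], intro ballI)
    fix u assume "u \<in> U"
    then show "Q *v u = P *v u"
      using psd_sqrt_on_eigenvector[OF that, of u "s u"] eig s Pu by simp
  qed
  ultimately show ?thesis
    unfolding mabs_def P_def[symmetric] using psd_onb_diagonal[OF U s, folded P_def]
    by (intro the_equality) blast+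
qed

text \<open>
  Singular value decomposition: an orthonormal eigenbasis of
  \<open>X\<^sup>* X\<close> is mapped by \<open>X\<close> to an orthogonal family whose norms are the singular values.\<close>
lemma trace_norm_singular_basis:
  fixes X :: "complex^'n^'n"
  shows "\<exists>U. onb U \<and> (\<forall>u\<in>U. \<forall>v\<in>U. u \<noteq> v \<longrightarrow> cinner (X *v u) (X *v v) = 0)
            \<and> trace_norm X = (\<Sum>u\<in>U. norm (X *v u))"
proof -
  define M where "M = madj X ** X"
  have "herm M"
    by (simp add: herm_def M_def madj_mult)
  then obtain U where U: "onb U" and eU: "\<forall>u\<in>U. \<exists>a::real. M *v u = complex_of_real a *s u"
    using herm_spectral by blast
  have Mxx: "cinner v (M *v u) = cinner (X *v v) (X *v u)" for u v
    by (simp add: M_def cinner_adj matrix_vector_mul_assoc[symmetric])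
  have Mu: "M *v u = complex_of_real ((norm (X *v u))^2) *s u" if u: "u \<in> U" for u
  proof -
    obtain a where a: "M *v u = complex_of_real a *s u"
      using eU u by blast
    have "complex_of_real a = cinner u (M *v u)"
      using a onb_cinner[OF U u u] by (simp add: cinner_scale_right)
    also have "\<dots> = complex_of_real ((norm (X *v u))^2)"
      by (simp only: Mxx cinner_self)
    finally show ?thesis
      using a by simp
  qed
  have "cinner (X *v u) (X *v v) = 0" if "u \<in> U" "v \<in> U" "u \<noteq> v" for u v
    using Mu[OF that(2)] onb_cinner[OF U that(1,2)] that(3)
    by (simp add: Mxx[symmetric] cinner_scale_right)
  moreover have "mabs X = (\<Sum>u\<in>U. outer (complex_of_real (norm (X *v u)) *s u) u)"
    using Mu by (intro mabs_eq_onb_diagonal[OF U]) (auto simp: M_def)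
  then have "trace (mabs X) = (\<Sum>u\<in>U. complex_of_real (norm (X *v u)))"
    unfolding trace_eq_sum_onb[OF U]
    by (intro sum.cong refl) (simp add: onb_diagonal_mult_vec[OF U] cinner_scale_right onb_cinner[OF U])
  then have "trace_norm X = (\<Sum>u\<in>U. norm (X *v u))"
    by (simp add: trace_norm_def)
  ultimately show ?thesis
    using U by blast
qed

lemma trace_norm_nonneg: "trace_norm X \<ge> 0"
  using trace_norm_singular_basis[of X] by (auto intro!: sum_nonneg)

lemma trace_mult_le_trace_norm:
  assumes W: "\<And>y. norm (madj W *v y) \<le> norm y"
  shows "cmod (trace (W ** X)) \<le> trace_norm X"
proof -
  obtain U where U: "onb U" and tn: "trace_norm X = (\<Sum>u\<in>U. norm (X *v u))"
    using trace_norm_singular_basis[of X] by blast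
  have "cmod (trace (W ** X)) \<le> (\<Sum>u\<in>U. cmod (cinner (madj W *v u) (X *v u)))"
    unfolding trace_mult_eq_sum_onb[OF U] by (rule norm_sum)
  also have "\<dots> \<le> (\<Sum>u\<in>U. norm (madj W *v u) * norm (X *v u))"
    by (intro sum_mono norm_cinner_le)
  also have "\<dots> \<le> (\<Sum>u\<in>U. norm (X *v u))"
    using W onb_norm[OF U] by (intro sum_mono mult_left_le_one_le) (auto, metis)
  finally show ?thesis
    using tn by simp
qed

lemma onb_extend_bij:
  fixes v :: "complex^'n \<Rightarrow> complex^'n"
  assumes U: "onb (U::(complex^'n) set)" and S: "S \<subseteq> U"
    and inj: "inj_on v S" and o: "orthonormal (v ` S)"
  shows "\<exists>V t. onb V \<and> bij_betw t U V \<and> (\<forall>u\<in>S. t u = v u)"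
proof -
  obtain V where VS: "v ` S \<subseteq> V" and V: "onb V"
    using orthonormal_extend_to_onb[OF o] by blast
  have fin: "finite U" "finite V" "finite S"
    using U V S by (auto simp: onb_def finite_subset)
  have "card (U - S) = card (V - v ` S)"
    using U V S VS fin by (simp add: card_Diff_subset card_image[OF inj] onb_def)
  then obtain g where g: "bij_betw g (U - S) (V - v ` S)"
    using finite_same_card_bij[of "U - S" "V - v ` S"] fin by auto
  define t where "t u = (if u \<in> S then v u else g u)" for u
  have "bij_betw t S (v ` S)"
    using inj by (simp add: bij_betw_def t_def inj_on_def image_def)
  moreover have "bij_betw t (U - S) (V - v ` S)"
    using g by (rule bij_betw_cong[THEN iffD1, rotated]) (simp add: t_def)
  ultimately have "bij_betw t (S \<union> (U - S)) (v ` S \<union> (V - v ` S))"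
    by (rule bij_betw_combine) simp
  moreover have "S \<union> (U - S) = U" "v ` S \<union> (V - v ` S) = V"
    using S VS by auto
  ultimately have "bij_betw t U V"
    by simp
  moreover have "\<forall>u\<in>S. t u = v u"
    by (simp add: t_def)
  ultimately show ?thesis
    using V by blast
qed

lemma unitary_of_onb_bij:
  assumes U: "onb U" and V: "onb V" and t: "bij_betw t U V"
  shows "\<exists>W. unitary W \<and> (\<forall>u\<in>U. madj W *v u = t u)"
proof -
  define W where "W = madj (\<Sum>u\<in>U. outer (t u) u)"
  have Wu: "madj W *v u = t u" if "u \<in> U" for u
    using onb_diagonal_mult_vec[OF U that] by (simp add: W_def)
  have tt: "cinner (t a) (t b) = (if a = b then 1 else 0)" if "a \<in> U" "b \<in> U" for a b
  proof -
    have "t a \<in> V" "t b \<in> V" "t a = t b \<longleftrightarrow> a = b"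
      using t that by (auto simp: bij_betw_def inj_on_eq_iff)
    then show ?thesis
      using onb_cinner[OF V] by metis
  qed
  have Wt: "W *v t u = u" if u: "u \<in> U" for u
  proof -
    have "W *v t u = (\<Sum>w\<in>U. cinner (t w) (t u) *s w)"
      by (simp add: W_def madj_sum madj_outer sum_mult_vec outer_mult_vec)
    also have "\<dots> = (\<Sum>w\<in>U. if w = u then u else 0)"
      using u tt by (intro sum.cong) auto
    finally show ?thesis
      using U u by (simp add: onb_def)
  qed
  have "madj W ** W = mat 1"
  proof (rule onb_matrix_eq[OF V], intro ballI)
    fix y assume "y \<in> V"
    then obtain u where "u \<in> U" "y = t u"
      using t by (auto simp: bij_betw_def)
    then show "(madj W ** W) *v y = mat 1 *v y"
      by (simp add: matrix_vector_mul_assoc[symmetric] Wt Wu)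
  qed
  moreover have "W ** madj W = mat 1"
    by (rule onb_matrix_eq[OF U]) (simp add: matrix_vector_mul_assoc[symmetric] Wt Wu)
  ultimately show ?thesis
    using Wu by (auto simp: unitary_def)
qed

text \<open>
  With \<open>X u\<^sub>i = s\<^sub>i v\<^sub>i\<close> for a singular basis, the unitary \<open>W\<close> with \<open>W\<^sup>* u\<^sub>i = v\<^sub>i\<close> gives
  \<open>tr (W X) = \<Sum> s\<^sub>i\<close>.\<close>
lemma unitary_attains_trace_norm:
  fixes X :: "complex^'n^'n"
  shows "\<exists>W. unitary W \<and> trace (W ** X) = complex_of_real (trace_norm X)"
proof -
  obtain U where U: "onb U"
    and orthX: "\<forall>u\<in>U. \<forall>v\<in>U. u \<noteq> v \<longrightarrow> cinner (X *v u) (X *v v) = 0"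
    and tn: "trace_norm X = (\<Sum>u\<in>U. norm (X *v u))"
    using trace_norm_singular_basis[of X] by blast
  define S where "S = {u\<in>U. X *v u \<noteq> 0}"
  define v where "v u = complex_of_real (1 / norm (X *v u)) *s (X *v u)" for u
  have vv: "cinner (v a) (v b) = (if a = b then 1 else 0)" if "a \<in> S" "b \<in> S" for a b
    using that orthX normalize_unit[of "X *v a"]
    by (auto simp: v_def cinner_scale_left cinner_scale_right S_def cinner_self power2_eq_square)
  have inj: "inj_on v S"
    using vv by (intro inj_onI) (metis one_neq_zero)
  have "orthonormal (v ` S)"
    using vv inj by (auto simp: orthonormal_def inj_on_eq_iff)
  then obtain V t where "onb V" "bij_betw t U V" and tv: "\<forall>u\<in>S. t u = v u"
    using onb_extend_bij[OF U _ inj] by (auto simp: S_def)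
  then obtain W where W: "unitary W" and Wt: "\<forall>u\<in>U. madj W *v u = t u"
    using unitary_of_onb_bij[OF U] by blast
  have "cinner (t u) (X *v u) = complex_of_real (norm (X *v u))" if "u \<in> U" for u
    using that tv by (cases "u \<in> S") (auto simp: S_def v_def cinner_scale_left cinner_self power2_eq_square)
  then have "trace (W ** X) = complex_of_real (trace_norm X)"
    by (simp add: trace_mult_eq_sum_onb[OF U] Wt tn)
  then show ?thesis
    using W by blast
qed

lemma unitary_norm_madj_mult_vec:
  assumes "unitary W"
  shows "norm (madj W *v y) = norm y"
proof -
  have "cinner (madj W *v y) (madj W *v y) = cinner y y"
    using assms by (simp add: cinner_adj[symmetric] matrix_vector_mul_assoc unitary_def)
  then have "(norm (madj W *v y))^2 = (norm y)^2"
    by (metis cinner_self of_real_eq_iff)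
  then show ?thesis
    by (simp add: power2_eq_iff_nonneg)
qed

lemma trace_norm_eq_max_trace:
  fixes X :: "complex^'n^'n"
  obtains W where "\<And>y. norm (madj W *v y) \<le> norm y" and "trace_norm X = cmod (trace (W ** X))"
proof -
  obtain W where W: "unitary W" and t: "trace (W ** X) = complex_of_real (trace_norm X)"
    using unitary_attains_trace_norm by blast
  show ?thesis
    using that[of W] unitary_norm_madj_mult_vec[OF W] trace_norm_nonneg[of X] by (simp add: t)
qed

lemma trace_mult_mscale: "trace (W ** mscale c A) = c * trace (W ** A)"
  by (simp add: trace_def matrix_matrix_mult_def mscale_def sum_distrib_left mult_ac)

lemma trace_norm_eq_0_iff: "trace_norm (A::complex^'n^'n) = 0 \<longleftrightarrow> A = 0"
proof
  obtain U where U: "onb U" and tn: "trace_norm A = (\<Sum>u\<in>U. norm (A *v u))"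
    using trace_norm_singular_basis[of A] by blast
  assume "trace_norm A = 0"
  then have "\<forall>u\<in>U. A *v u = 0 *v u"
    using tn U by (simp add: sum_nonneg_eq_0_iff onb_def)
  then show "A = 0"
    by (rule onb_matrix_eq[OF U])
next
  assume "A = 0"
  then show "trace_norm A = 0"
    using trace_norm_singular_basis[of A] by auto
qed

lemma trace_norm_mscale: "trace_norm (mscale c A) = cmod c * trace_norm (A::complex^'n^'n)"
proof (rule antisym)
  obtain W where W: "\<And>y. norm (madj W *v y) \<le> norm y"
    and t: "trace_norm (mscale c A) = cmod (trace (W ** mscale c A))"
    using trace_norm_eq_max_trace by blast
  show "trace_norm (mscale c A) \<le> cmod c * trace_norm A"
    using trace_mult_le_trace_norm[OF W, of A]
    by (simp add: t trace_mult_mscale norm_mult mult_left_mono)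
next
  obtain W where W: "\<And>y. norm (madj W *v y) \<le> norm y"
    and t: "trace_norm A = cmod (trace (W ** A))"
    using trace_norm_eq_max_trace by blast
  show "cmod c * trace_norm A \<le> trace_norm (mscale c A)"
    using trace_mult_le_trace_norm[OF W, of "mscale c A"]
    by (simp add: t trace_mult_mscale norm_mult)
qed

lemma trace_norm_triangle: "trace_norm (A + B) \<le> trace_norm A + trace_norm (B::complex^'n^'n)"
proof -
  obtain W where W: "\<And>y. norm (madj W *v y) \<le> norm y"
    and t: "trace_norm (A + B) = cmod (trace (W ** (A + B)))"
    using trace_norm_eq_max_trace by blast
  have "trace_norm (A + B) \<le> cmod (trace (W ** A)) + cmod (trace (W ** B))"
    by (simp add: t matrix_add_ldistrib trace_add norm_triangle_ineq)
  also have "\<dots> \<le> trace_norm A + trace_norm B"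
    using trace_mult_le_trace_norm[OF W] by (intro add_mono)
  finally show ?thesis .
qed

lemma trace_norm_is_matrix_norm: "is_matrix_norm (trace_norm :: complex^'n^'n \<Rightarrow> real)"
  unfolding is_matrix_norm_def
  using trace_norm_nonneg trace_norm_eq_0_iff trace_norm_mscale trace_norm_triangle by blast

section \<open>The trace norm is an \<open>L\<close>-norm dominating the numerical radius\<close>

lemma cinner_le_trace_norm:
  assumes x: "norm x = 1"
  shows "cmod (cinner x (A *v x)) \<le> trace_norm A"
proof -
  obtain U where U: "onb U" and tn: "trace_norm A = (\<Sum>u\<in>U. norm (A *v u))"
    using trace_norm_singular_basis[of A] by blast
  have "A *v x = (\<Sum>u\<in>U. cinner u x *s (A *v u))"
    by (subst onb_expansion[OF U, of x]) (simp add: mult_vec_sum vector_scalar_commute)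
  then have "cinner x (A *v x) = (\<Sum>u\<in>U. cinner u x * cinner x (A *v u))"
    by (simp add: cinner_sum_right cinner_scale_right)
  then have "cmod (cinner x (A *v x)) \<le> (\<Sum>u\<in>U. cmod (cinner u x) * cmod (cinner x (A *v u)))"
    using norm_sum[of "\<lambda>u. cinner u x * cinner x (A *v u)" U] by (simp add: norm_mult)
  also have "\<dots> \<le> (\<Sum>u\<in>U. 1 * norm (A *v u))"
  proof (intro sum_mono mult_mono)
    fix u assume "u \<in> U"
    then show "cmod (cinner u x) \<le> 1"
      using norm_cinner_le[of u x] onb_norm[OF U] x by simp
    show "cmod (cinner x (A *v u)) \<le> norm (A *v u)"
      using norm_cinner_le[of x "A *v u"] x by simp
  qed auto
  finally show ?thesis
    using tn by simp
qed

lemma norm_axis_1_complex: "norm (axis i (1::complex) :: complex^'n) = 1"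
  by (simp add: norm_vec_def L2_set_def axis_def if_distrib[of "\<lambda>z. (cmod z)^2"] cong: if_cong)

lemma numerical_radius_le_trace_norm: "numerical_radius (A::complex^'n^'n) \<le> trace_norm A"
  unfolding numerical_radius_def
proof (rule cSUP_least)
  show "{x::complex^'n. norm x = 1} \<noteq> {}"
    using norm_axis_1_complex by blast
qed (use cinner_le_trace_norm in auto)

lemma cinner_le_numerical_radius:
  assumes "norm x = 1"
  shows "cmod (cinner x (A *v x)) \<le> numerical_radius A"
  unfolding numerical_radius_def
proof (rule cSUP_upper)
  show "bdd_above ((\<lambda>x. cmod (cinner x (A *v x))) ` {x. norm x = 1})"
    by (rule bdd_aboveI[where M = "trace_norm A"]) (auto intro: cinner_le_trace_norm)
qed (use assms in simp)

lemma sum_norm_power2_frame: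
  assumes C: "(\<Sum>i<k. madj (C i) ** C i) = mat 1"
  shows "(\<Sum>i<k. (norm (C i *v y))^2) = (norm y)^2"
proof -
  have "complex_of_real (\<Sum>i<k. (norm (C i *v y))^2) = (\<Sum>i<k. cinner (C i *v y) (C i *v y))"
    by (simp add: cinner_self)
  also have "\<dots> = cinner y ((\<Sum>i<k. madj (C i) ** C i) *v y)"
    by (simp add: cinner_adj matrix_vector_mul_assoc[symmetric] sum_mult_vec cinner_sum_right)
  also have "\<dots> = complex_of_real ((norm y)^2)"
    using C by (simp add: cinner_self)
  finally show ?thesis
    using of_real_eq_iff by blast
qed

lemma mult_le_weighted_mean:
  fixes a b s :: real
  assumes "s > 0"
  shows "a * b \<le> (s * a^2 + b^2 / s) / 2"
proof -
  have "2 * s * (a * b) \<le> s^2 * a^2 + b^2"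
    using sum_squares_ge_zero[of "s * a - b" 0] by (simp add: power2_eq_square algebra_simps)
  also have "\<dots> = 2 * s * ((s * a^2 + b^2 / s) / 2)"
    using assms by (simp add: field_simps power2_eq_square)
  finally show ?thesis
    using assms by simp
qed

text \<open>Weighted AM-GM with weight \<open>\<parallel>y\<parallel>\<close>, then the frame identity on both resulting sums.\<close>
lemma sum_frame_products_le:
  assumes C: "(\<Sum>i<k. madj (C i) ** C i) = mat 1" and u: "norm u = 1"
  shows "(\<Sum>i<k. norm (C i *v u) * norm (C i *v y)) \<le> norm y"
proof (cases "y = 0")
  case False
  define s where "s = norm y"
  have s: "s > 0"
    using False by (simp add: s_def)
  have "(\<Sum>i<k. norm (C i *v u) * norm (C i *v y))
      \<le> (\<Sum>i<k. (s * (norm (C i *v u))^2 + (norm (C i *v y))^2 / s) / 2)"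
    by (intro sum_mono mult_le_weighted_mean s)
  also have "\<dots> = (s * (\<Sum>i<k. (norm (C i *v u))^2) + (\<Sum>i<k. (norm (C i *v y))^2) / s) / 2"
    by (simp only: sum_divide_distrib[symmetric] sum.distrib sum_distrib_left)
  also have "\<dots> = s"
    using s unfolding sum_norm_power2_frame[OF C] u s_def by (simp add: power2_eq_square)
  finally show ?thesis
    by (simp add: s_def)
qed simp

lemma trace_mult_congruence:
  assumes U: "onb U"
  shows "trace (W ** (C ** X ** madj C)) = (\<Sum>u\<in>U. cinner (madj W *v (C *v u)) (C *v (X *v u)))"
proof -
  have "trace (W ** (C ** X ** madj C)) = trace ((madj C ** W ** C) ** X)"
    using trace_mul_sym[of "W ** (C ** X)" "madj C"] by (simp only: matrix_mul_assoc)
  also have "\<dots> = (\<Sum>u\<in>U. cinner (madj (madj C ** W ** C) *v u) (X *v u))"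
    by (rule trace_mult_eq_sum_onb[OF U])
  also have "\<dots> = (\<Sum>u\<in>U. cinner (madj W *v (C *v u)) (C *v (X *v u)))"
    by (simp add: madj_mult matrix_mul_assoc matrix_vector_mul_assoc[symmetric] cinner_adj[symmetric])
  finally show ?thesis .
qed

lemma trace_norm_is_L_norm: "is_L_norm (trace_norm :: complex^'n^'n \<Rightarrow> real)"
  unfolding is_L_norm_def
proof (intro conjI trace_norm_is_matrix_norm allI impI)
  fix k :: nat and C :: "nat \<Rightarrow> complex^'n^'n" and X :: "complex^'n^'n"
  assume C: "(\<Sum>i<k. madj (C i) ** C i) = mat 1"
  have "\<forall>i. \<exists>W. (\<forall>y. norm (madj W *v y) \<le> norm y) \<and>
      trace_norm (C i ** X ** madj (C i)) = cmod (trace (W ** (C i ** X ** madj (C i))))"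
    by (meson trace_norm_eq_max_trace)
  then obtain W where W: "\<And>i y. norm (madj (W i) *v y) \<le> norm y"
    and tW: "\<And>i. trace_norm (C i ** X ** madj (C i)) = cmod (trace (W i ** (C i ** X ** madj (C i))))"
    by metis
  obtain U where U: "onb U" and tn: "trace_norm X = (\<Sum>u\<in>U. norm (X *v u))"
    using trace_norm_singular_basis[of X] by blast
  have "(\<Sum>i<k. trace_norm (C i ** X ** madj (C i)))
      = (\<Sum>i<k. cmod (\<Sum>u\<in>U. cinner (madj (W i) *v (C i *v u)) (C i *v (X *v u))))"
    by (simp add: tW trace_mult_congruence[OF U])
  also have "\<dots> \<le> (\<Sum>i<k. \<Sum>u\<in>U. norm (C i *v u) * norm (C i *v (X *v u)))"
  proof (intro sum_mono order_trans[OF norm_sum])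
    fix i u
    show "cmod (cinner (madj (W i) *v (C i *v u)) (C i *v (X *v u)))
        \<le> norm (C i *v u) * norm (C i *v (X *v u))"
      using norm_cinner_le W[of i "C i *v u"] by (metis mult_right_mono norm_ge_zero order_trans)
  qed
  also have "\<dots> = (\<Sum>u\<in>U. \<Sum>i<k. norm (C i *v u) * norm (C i *v (X *v u)))"
    by (rule sum.swap)
  also have "\<dots> \<le> (\<Sum>u\<in>U. norm (X *v u))"
    by (intro sum_mono sum_frame_products_le[OF C] onb_norm[OF U])
  finally show "(\<Sum>i<k. trace_norm (C i ** X ** madj (C i))) \<le> trace_norm X"
    using tn by simp
qed

section \<open>Minimality\<close>

lemma unitary_herm_parts_commute:
  assumes "unitary W"
  shows "(W + madj W) ** mscale \<i> (madj W - W) = mscale \<i> (madj W - W) ** (W + madj W)"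
proof -
  have inv: "W *v (madj W *v x) = x" "madj W *v (W *v x) = x" for x
    using assms by (simp_all add: unitary_def matrix_vector_mul_assoc)
  show ?thesis
    by (subst matrix_eq)
       (simp add: matrix_vector_mul_assoc[symmetric] mscale_mult_vec
        matrix_vector_mult_add_rdistrib matrix_vector_mult_diff_rdistrib
        matrix_vector_right_distrib matrix_vector_mult_diff_distrib vector_scalar_commute inv
        vector_add_ldistrib vector_ssub_ldistrib algebra_simps)
qed

text \<open>
  A unitary \<open>W\<close> is diagonalised by a common eigenbasis of the commuting Hermitian matrices
  \<open>H = W + W\<^sup>*\<close> and \<open>K = \<i> (W\<^sup>* - W)\<close>, since \<open>2 W\<^sup>* = H - \<i> K\<close>.\<close>
lemma unitary_eigenbasis:
  assumes W: "unitary W"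
  shows "\<exists>U::(complex^'n) set. onb U \<and> (\<forall>u\<in>U. \<exists>m. madj W *v u = m *s u \<and> cmod m = 1)"
proof -
  define H where "H = W + madj W"
  define K where "K = mscale \<i> (madj W - W)"
  have "herm H"
    by (simp add: herm_def H_def madj_add add.commute)
  moreover have "herm K"
    by (simp add: herm_def K_def madj_def mscale_def vec_eq_iff algebra_simps)
  ultimately obtain U where U: "onb U" and e: "\<forall>u\<in>U. common_eigenvector H K u"
    using commuting_herm_simultaneous_onb unitary_herm_parts_commute[OF W] H_def K_def by blast
  have "madj W = mscale (1 / 2) (H - mscale \<i> K)"
    by (simp add: H_def K_def mscale_def vec_eq_iff algebra_simps)
  then have adj: "madj W *v x = (1 / 2) *s (H *v x - \<i> *s (K *v x))" for x
    by (simp add: mscale_mult_vec matrix_vector_mult_diff_rdistrib)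
  have "\<exists>m. madj W *v u = m *s u \<and> cmod m = 1" if u: "u \<in> U" for u
  proof -
    obtain a b :: real where "H *v u = complex_of_real a *s u" "K *v u = complex_of_real b *s u"
      using e u unfolding common_eigenvector_def by blast
    then have m: "madj W *v u = ((complex_of_real a - \<i> * complex_of_real b) / 2) *s u"
      by (simp add: adj vec_eq_iff algebra_simps)
    then have "cmod ((complex_of_real a - \<i> * complex_of_real b) / 2) = 1"
      using unitary_norm_madj_mult_vec[OF W, of u] onb_norm[OF U u] by (simp add: norm_scale)
    then show ?thesis
      using m by blast
  qed
  then show ?thesis
    using U by blast
qed

lemma trace_norm_le_sum_diagonal:
  fixes X :: "complex^'n^'n"
  shows "\<exists>U. onb U \<and> trace_norm X \<le> (\<Sum>u\<in>U. cmod (cinner u (X *v u)))"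
proof -
  obtain W where W: "unitary W" and t: "trace (W ** X) = complex_of_real (trace_norm X)"
    using unitary_attains_trace_norm by blast
  obtain U where U: "onb U" and e: "\<forall>u\<in>U. \<exists>m. madj W *v u = m *s u \<and> cmod m = 1"
    using unitary_eigenbasis[OF W] by blast
  have "trace_norm X = cmod (\<Sum>u\<in>U. cinner (madj W *v u) (X *v u))"
    using t trace_norm_nonneg[of X] by (simp add: trace_mult_eq_sum_onb[OF U, symmetric])
  also have "\<dots> \<le> (\<Sum>u\<in>U. cmod (cinner (madj W *v u) (X *v u)))"
    by (rule norm_sum)
  also have "\<dots> = (\<Sum>u\<in>U. cmod (cinner u (X *v u)))"
    using e by (intro sum.cong refl) (auto simp: cinner_scale_left norm_mult)
  finally show ?thesis
    using U by blast
qed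

lemma outer_adj_mult_self: "cinner u u = 1 \<Longrightarrow> madj (outer u u) ** outer u u = outer u u"
  by (subst matrix_eq) (simp add: madj_outer matrix_vector_mul_assoc[symmetric] outer_mult_vec cinner_scale_right)

lemma outer_congruence: "outer u u ** X ** madj (outer u u) = mscale (cinner u (X *v u)) (outer u u)"
  by (subst matrix_eq)
     (simp add: madj_outer matrix_vector_mul_assoc[symmetric] outer_mult_vec mscale_mult_vec
       cinner_scale_right vector_scalar_commute vector_smult_assoc mult.commute)

lemma L_norm_pinching:
  assumes L: "is_L_norm N" and U: "onb U"
  shows "(\<Sum>u\<in>U. N (outer u u ** X ** madj (outer u u))) \<le> N X"
proof -
  obtain f where f: "bij_betw f {..<card U} U"
    using ex_bij_betw_nat_finite[of U] U by (auto simp: onb_def lessThan_atLeast0)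
  define C where "C i = outer (f i) (f i)" for i
  have fU: "f i \<in> U" if "i < card U" for i
    using f that by (auto simp: bij_betw_def)
  have "(\<Sum>i<card U. madj (C i) ** C i) = (\<Sum>i<card U. outer (f i) (f i))"
    using fU onb_cinner[OF U] by (intro sum.cong) (auto simp: C_def outer_adj_mult_self)
  also have "\<dots> = mat 1"
    using sum.reindex_bij_betw[OF f, of "\<lambda>u. outer u u"] onb_sum_outer[OF U] by simp
  finally have "(\<Sum>i<card U. N (C i ** X ** madj (C i))) \<le> N X"
    using L by (simp add: is_L_norm_def)
  then show ?thesis
    using sum.reindex_bij_betw[OF f, of "\<lambda>u. N (outer u u ** X ** madj (outer u u))"]
    by (simp add: C_def)
qed

text \<open>\<open>N\<close> dominates \<open>\<omega>\<close>, which is \<open>1\<close> on a rank-one projection, so pinching bounds the diagonal.\<close>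
lemma trace_norm_le_L_norm:
  fixes N :: "complex^'n^'n \<Rightarrow> real"
  assumes L: "is_L_norm N" and nr: "\<And>A. numerical_radius A \<le> N A"
  shows "trace_norm X \<le> N X"
proof -
  obtain U where U: "onb U" and d: "trace_norm X \<le> (\<Sum>u\<in>U. cmod (cinner u (X *v u)))"
    using trace_norm_le_sum_diagonal[of X] by blast
  have homogeneous: "N (mscale c A) = cmod c * N A" for c A
    using L by (simp add: is_L_norm_def is_matrix_norm_def)
  have "cmod (cinner u (X *v u)) \<le> N (outer u u ** X ** madj (outer u u))" if u: "u \<in> U" for u
  proof -
    have "1 = cmod (cinner u (outer u u *v u))"
      using onb_cinner[OF U u u] by (simp add: outer_mult_vec cinner_scale_right)
    also have "\<dots> \<le> numerical_radius (outer u u)"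
      by (rule cinner_le_numerical_radius[OF onb_norm[OF U u]])
    also have "\<dots> \<le> N (outer u u)"
      by (rule nr)
    finally have "cmod (cinner u (X *v u)) * 1 \<le> cmod (cinner u (X *v u)) * N (outer u u)"
      by (intro mult_left_mono) auto
    then show ?thesis
      by (simp add: outer_congruence homogeneous)
  qed
  then have "(\<Sum>u\<in>U. cmod (cinner u (X *v u))) \<le> (\<Sum>u\<in>U. N (outer u u ** X ** madj (outer u u)))"
    by (rule sum_mono)
  also have "\<dots> \<le> N X"
    by (rule L_norm_pinching[OF L U])
  finally show ?thesis
    using d by simp
qed

theorem theorem3p4:
  shows "(is_L_norm (trace_norm :: complex^'n^'n \<Rightarrow> real) \<and>
          (\<forall>A::complex^'n^'n. numerical_radius A \<le> trace_norm A)) \<and>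
         (\<forall>N::complex^'n^'n \<Rightarrow> real. is_L_norm N \<and> (\<forall>A. numerical_radius A \<le> N A) \<longrightarrow>
            (\<forall>A. trace_norm A \<le> N A))"
  using trace_norm_is_L_norm numerical_radius_le_trace_norm trace_norm_le_L_norm by blast

end
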